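(* Let $E$ be a normed space over $\mathbb{K}\in\{\mathbb{R},\mathbb{C}\}$, let $n\in\{1,2\}$, and let $P:E\to\mathbb{K}$ be an $n$-homogeneous polynomial (not assumed continuous). Then $P$ is continuous if and only if $P(C)$ is connected for every connected set $C\subset E$.
   Context: A map $P:E\to\mathbb{K}$ is an $n$-homogeneous polynomial if there is a symmetric $n$-linear mapping $L:E^n\to\mathbb{K}$ (not necessarily continuous) with $P(x)=L(x,\ldots,x)$ for all $x\in E$. *)

theory Defs
  imports "HOL-Analysis.Analysis" "HOL-Combinatorics.Permutations"
begin

text \<open>Tuples in E^n are functions nat => 'a,
  of which only the arguments 0..n-1 matter.\<close>
definition symmetric_multilinear :: "('k::comm_ring_1 \<Rightarrow> 'a::ab_group_add \<Rightarrow> 'a) \<Rightarrow> nat \<Rightarrow> ((nat \<Rightarrow> 'a) \<Rightarrow> 'k) \<Rightarrow> bool" where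
  "symmetric_multilinear sc n L \<longleftrightarrow>
     (\<forall>v w. (\<forall>i<n. v i = w i) \<longrightarrow> L v = L w) \<and>
     (\<forall>v i x y. i < n \<longrightarrow> L (v(i := x + y)) = L (v(i := x)) + L (v(i := y))) \<and>
     (\<forall>v i c x. i < n \<longrightarrow> L (v(i := sc c x)) = c * L (v(i := x))) \<and>
     (\<forall>v p. p permutes {..<n} \<longrightarrow> L (v \<circ> p) = L v)"

definition homogeneous_polynomial :: "('k::comm_ring_1 \<Rightarrow> 'a::ab_group_add \<Rightarrow> 'a) \<Rightarrow> nat \<Rightarrow> ('a \<Rightarrow> 'k) \<Rightarrow> bool" where
  "homogeneous_polynomial sc n P \<longleftrightarrow>
     (\<exists>L. symmetric_multilinear sc n L \<and> (\<forall>x. P x = L (\<lambda>_. x)))"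

text \<open>A complex scalar multiplication making a real normed space into a complex normed
  space (extending the real scalar multiplication, with norm(c x) = |c| norm x).\<close>
definition complex_normed_scaling :: "(complex \<Rightarrow> 'a::real_normed_vector \<Rightarrow> 'a) \<Rightarrow> bool" where
  "complex_normed_scaling sc \<longleftrightarrow>
     (\<forall>c x y. sc c (x + y) = sc c x + sc c y) \<and>
     (\<forall>c d x. sc (c + d) x = sc c x + sc d x) \<and>
     (\<forall>c d x. sc (c * d) x = sc c (sc d x)) \<and>
     (\<forall>x. sc 1 x = x) \<and>
     (\<forall>r x. sc (complex_of_real r) x = scaleR r x) \<and>
     (\<forall>c x. norm (sc c x) = cmod c * norm x)"

end

theory Submission
  imports Defs
begin

text \<open>If \<open>P\<close> is discontinuous, homogeneity makes it unbounded on every ball around \<open>0\<close>, and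
  rescaling yields points arbitrarily close to \<open>0\<close> at which a real-valued companion \<open>Q\<close> of \<open>P\<close>
  (\<open>P\<close>, \<open>-P\<close> or \<open>Re P\<close>) equals \<open>1\<close>. Any two points of \<open>{Q = 1}\<close> can be joined inside
  \<open>{Q \<ge> 1}\<close>, up to replacing one of them by its negative: by a segment for \<open>n = 1\<close>, by an
  elliptic arc \<open>cos t a + sin t b\<close> for \<open>n = 2\<close>. So the component of \<open>{Q \<ge> 1}\<close> through such
  a point accumulates at \<open>0\<close>; together with \<open>0\<close> it is connected, but \<open>Q\<close> maps it into
  \<open>{0} \<union> [1, \<infinity>)\<close> hitting both parts, so its image under \<open>P\<close> is not connected.\<close>

definition preserves_connected :: "('a::topological_space \<Rightarrow> 'b::topological_space) \<Rightarrow> bool" where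
  "preserves_connected f \<longleftrightarrow> (\<forall>C. connected C \<longrightarrow> connected (f ` C))"

lemma continuous_imp_preserves_connected:
  "continuous_on UNIV f \<Longrightarrow> preserves_connected f"
  unfolding preserves_connected_def
  by (metis connected_continuous_image continuous_on_subset subset_UNIV)

lemma preserves_connected_compose:
  "continuous_on UNIV h \<Longrightarrow> preserves_connected f \<Longrightarrow> preserves_connected (h \<circ> f)"
  unfolding preserves_connected_def image_comp[symmetric]
  by (metis connected_continuous_image continuous_on_subset subset_UNIV)

lemma linear_norm_bound_if_bounded_on_ball:
  fixes f :: "'a::real_normed_vector \<Rightarrow> 'b::real_normed_vector"
  assumes f: "linear f" and "e > 0" and bound: "\<And>x. norm x < e \<Longrightarrow> norm (f x) \<le> M"
  shows "norm (f x) \<le> 2 * M / e * norm x"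
proof (cases "x = 0")
  case True
  then show ?thesis using linear_0[OF f] by simp
next
  case False
  define c where "c = e / (2 * norm x)"
  have "c > 0" "norm (c *\<^sub>R x) < e"
    using \<open>e > 0\<close> False by (simp_all add: c_def)
  then have "c * norm (f x) \<le> M"
    using bound linear_scale[OF f] by fastforce
  then show ?thesis
    using \<open>e > 0\<close> False by (simp add: c_def field_simps)
qed

lemma linear_unbounded_near_zero_if_discontinuous:
  fixes f :: "'a::real_normed_vector \<Rightarrow> 'b::real_normed_vector"
  assumes f: "linear f" and "\<not> continuous_on UNIV f" and "e > 0"
  shows "\<exists>x. norm x < e \<and> 1 < norm (f x)"
proof (rule ccontr)
  assume "\<not> ?thesis"
  then have "norm (f x) \<le> 1" if "norm x < e" for x
    using that by (meson not_less)
  then have "norm (f x) \<le> norm x * (2 / e)" for x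
    using linear_norm_bound_if_bounded_on_ball[OF f \<open>e > 0\<close>, of 1] by (simp add: mult.commute)
  then have "bounded_linear f"
    using f by (intro bounded_linear_intro[where K="2 / e"]) (auto simp: linear_add linear_scale)
  then show False
    using \<open>\<not> continuous_on UNIV f\<close> linear_continuous_on by blast
qed

lemma bilinear_unbounded_near_zero_if_discontinuous:
  fixes f :: "'a::real_normed_vector \<Rightarrow> 'a \<Rightarrow> 'b::real_normed_vector"
  assumes f: "bilinear f" and sym: "\<And>x y. f x y = f y x"
    and "\<not> continuous_on UNIV (\<lambda>x. f x x)" and "e > 0"
  shows "\<exists>x. norm x < e \<and> 1 < norm (f x x)"
proof (rule ccontr)
  assume "\<not> ?thesis"
  then have diag: "norm (f x x) \<le> 1" if "norm x < e" for x
    using that by (meson not_less)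
  have small: "norm (f u v) \<le> 1/2" if "norm u < e/2" "norm v < e/2" for u v
  proof -
    have "norm (u + v) < e" "norm (u - v) < e"
      using that norm_triangle_ineq[of u v] norm_triangle_ineq4[of u v] by linarith+
    then have "norm (f (u + v) (u + v)) \<le> 1" "norm (f (u - v) (u - v)) \<le> 1"
      by (simp_all add: diag)
    moreover have "f (u + v) (u + v) - f (u - v) (u - v) = 2 *\<^sub>R (2 *\<^sub>R f u v)"
      by (simp add: bilinear_ladd[OF f] bilinear_radd[OF f] bilinear_lsub[OF f]
          bilinear_rsub[OF f] sym[of v u] scaleR_2 algebra_simps)
    ultimately show ?thesis
      using norm_triangle_ineq4[of "f (u + v) (u + v)" "f (u - v) (u - v)"] by simp
  qed
  have half: "e / 2 > 0" using \<open>e > 0\<close> by simp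
  have linear_right: "linear (f u)" and linear_left: "linear (\<lambda>u. f u v)" for u v
    using f by (simp_all add: bilinear_def)
  have "norm (f u v) \<le> 2 / e * norm v" if "norm u < e/2" for u v
    using linear_norm_bound_if_bounded_on_ball[OF linear_right half, where M="1/2"] small[OF that]
    by simp
  then have "norm (f u v) \<le> norm u * norm v * (8 / e^2)" for u v
    using linear_norm_bound_if_bounded_on_ball[OF linear_left half, where M="2 / e * norm v" and x=u]
    by (simp add: field_simps power2_eq_square)
  then have "bounded_bilinear f"
    by (intro bounded_bilinear.intro exI[of _ "8 / e^2"])
      (auto simp: bilinear_ladd[OF f] bilinear_radd[OF f] bilinear_lmul[OF f] bilinear_rmul[OF f])
  then show False
    using \<open>\<not> continuous_on UNIV (\<lambda>x. f x x)\<close> bounded_bilinear.continuous_on continuous_on_id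
    by blast
qed

lemma bilinear_compose_linear:
  assumes "bilinear B" "linear g"
  shows "bilinear (\<lambda>x y. g (B x y))"
proof -
  have "linear (g \<circ> B x)" "linear (g \<circ> (\<lambda>x. B x y))" for x y
    using assms by (auto intro!: linear_compose simp: bilinear_def)
  then show ?thesis
    unfolding bilinear_def comp_def by simp
qed

lemma zero_in_closure_level_set_one:
  fixes sc :: "'k::real_normed_field \<Rightarrow> 'a::real_normed_vector \<Rightarrow> 'a" and P :: "'a \<Rightarrow> 'k"
  assumes norm_sc: "\<And>c x. norm (sc c x) = norm c * norm x"
    and homogeneous: "\<And>c x. P (sc c x) = c ^ n * P x" and "n \<noteq> 0"
    and roots: "\<And>x. P x \<noteq> 0 \<Longrightarrow> \<exists>c. c ^ n * P x = 1"
    and unbounded: "\<And>e. e > 0 \<Longrightarrow> \<exists>x. norm x < e \<and> 1 < norm (P x)"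
  shows "0 \<in> closure {x. P x = 1}"
  unfolding closure_approachable
proof (intro allI impI)
  fix e :: real
  assume "e > 0"
  then obtain x where x: "norm x < e" "1 < norm (P x)"
    using unbounded by blast
  then obtain c where c: "c ^ n * P x = 1"
    using roots by force
  then have "norm (c ^ n * P x) = 1"
    by simp
  then have "norm c ^ n * norm (P x) = 1"
    by (simp add: norm_mult norm_power)
  then have "norm c ^ n = inverse (norm (P x))"
    by (metis inverse_unique mult.commute)
  then have "norm c ^ n < 1"
    using x(2) by (simp add: inverse_less_1_iff)
  then have "norm c < 1"
    using \<open>n \<noteq> 0\<close> by (simp add: power_less_one_iff)
  then have "norm (sc c x) < e"
    using x(1) mult_left_le_one_le[of "norm x" "norm c"] by (simp add: norm_sc)
  moreover have "P (sc c x) = 1"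
    using c by (simp add: homogeneous)
  ultimately show "\<exists>y\<in>{x. P x = 1}. dist y 0 < e"
    by auto
qed

lemma not_preserves_connected_if_level_set_linked:
  fixes Q :: "'a::real_normed_vector \<Rightarrow> real"
  assumes "Q 0 = 0" and level: "0 \<in> closure {x. Q x = 1}"
    and linked: "\<And>a b. Q a = 1 \<Longrightarrow> Q b = 1 \<Longrightarrow>
      \<exists>S. connected S \<and> S \<subseteq> {x. 1 \<le> Q x} \<and> a \<in> S \<and> (b \<in> S \<or> - b \<in> S)"
  shows "\<not> preserves_connected Q"
proof
  assume preserves: "preserves_connected Q"
  obtain a where a: "Q a = 1"
    using level closure_empty by (metis (mono_tags, lifting) empty_Collect_eq equals0D)
  define D where "D = \<Union> {S. connected S \<and> S \<subseteq> {x. 1 \<le> Q x} \<and> a \<in> S}"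
  have "connected D"
    unfolding D_def using a by (intro connected_Union) (auto intro!: exI[of _ "{a}"])
  have "a \<in> D" "D \<subseteq> {x. 1 \<le> Q x}"
    using a unfolding D_def by (auto intro!: exI[of _ "{a}"])
  have "0 \<in> closure D"
    unfolding closure_approachable
  proof (intro allI impI)
    fix e :: real
    assume "e > 0"
    then obtain b where b: "Q b = 1" "norm b < e"
      using level unfolding closure_approachable by auto
    then obtain S where "connected S" "S \<subseteq> {x. 1 \<le> Q x}" "a \<in> S" "b \<in> S \<or> - b \<in> S"
      using linked a by blast
    then have "b \<in> D \<or> - b \<in> D"
      unfolding D_def by blast
    moreover have "dist b 0 < e" "dist (- b) 0 < e"
      using b(2) by simp_all
    ultimately show "\<exists>y\<in>D. dist y 0 < e"
      by blast
  qed
  then have "connected (insert 0 D)"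
    using connected_intermediate_closure[OF \<open>connected D\<close>] closure_subset by blast
  then have "connected (Q ` insert 0 D)"
    using preserves unfolding preserves_connected_def by blast
  moreover have "0 \<in> Q ` insert 0 D" "1 \<in> Q ` insert 0 D"
    using \<open>Q 0 = 0\<close> a \<open>a \<in> D\<close> by auto
  ultimately have "1/2 \<in> Q ` insert 0 D"
    by (rule connectedD_interval) auto
  then show False
    using \<open>Q 0 = 0\<close> \<open>D \<subseteq> {x. 1 \<le> Q x}\<close> by auto
qed

lemma linear_functional_not_preserves_connected:
  fixes Q :: "'a::real_normed_vector \<Rightarrow> real"
  assumes Q: "linear Q" and "0 \<in> closure {x. Q x = 1}"
  shows "\<not> preserves_connected Q"
proof (rule not_preserves_connected_if_level_set_linked)
  show "Q 0 = 0" using linear_0[OF Q] .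
  fix a b
  assume "Q a = 1" "Q b = 1"
  then have "closed_segment a b \<subseteq> {x. 1 \<le> Q x}"
    by (auto simp: closed_segment_def linear_add[OF Q] linear_scale[OF Q])
  then show "\<exists>S. connected S \<and> S \<subseteq> {x. 1 \<le> Q x} \<and> a \<in> S \<and> (b \<in> S \<or> - b \<in> S)"
    by (intro exI[of _ "closed_segment a b"]) auto
qed fact

lemma quadratic_form_ge_one_on_arc:
  fixes B :: "'a::real_vector \<Rightarrow> 'a \<Rightarrow> real"
  assumes B: "bilinear B" and sym: "\<And>x y. B x y = B y x"
    and "B a a = 1" "B b b = 1" "0 \<le> B a b" "0 \<le> t" "t \<le> pi/2"
  defines "x \<equiv> cos t *\<^sub>R a + sin t *\<^sub>R b"
  shows "1 \<le> B x x"
proof -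
  have "B x x = (cos t)\<^sup>2 * B a a + (sin t)\<^sup>2 * B b b + 2 * (sin t * cos t) * B a b"
    unfolding x_def
    by (simp add: bilinear_ladd[OF B] bilinear_radd[OF B] bilinear_lmul[OF B]
        bilinear_rmul[OF B] sym[of b a] algebra_simps power2_eq_square)
  also have "\<dots> = 1 + 2 * (sin t * cos t) * B a b"
    using assms(3,4) sin_cos_squared_add[of t] by simp
  finally show ?thesis
    using assms(5-7) sin_ge_zero[of t] cos_ge_zero[of t] by simp
qed

lemma quadratic_form_not_preserves_connected:
  fixes B :: "'a::real_normed_vector \<Rightarrow> 'a \<Rightarrow> real"
  assumes B: "bilinear B" and sym: "\<And>x y. B x y = B y x"
    and "0 \<in> closure {x. B x x = 1}"
  shows "\<not> preserves_connected (\<lambda>x. B x x)"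
proof (rule not_preserves_connected_if_level_set_linked)
  show "B 0 0 = 0" using bilinear_lzero[OF B] by simp
  fix a b
  assume "B a a = 1" "B b b = 1"
  \<comment> \<open>Join \<open>a\<close> to whichever of \<open>\<pm>b\<close> makes an acute angle with it.\<close>
  define b' where "b' = (if 0 \<le> B a b then b else - b)"
  have b': "B b' b' = 1" "0 \<le> B a b'" "b \<in> {b', - b'}"
    using \<open>B b b = 1\<close> by (auto simp: b'_def bilinear_lneg[OF B] bilinear_rneg[OF B])
  define S where "S = (\<lambda>t. cos t *\<^sub>R a + sin t *\<^sub>R b') ` {0..pi/2}"
  have "connected S"
    unfolding S_def by (intro connected_continuous_image continuous_intros) auto
  moreover have "a \<in> S" "b' \<in> S"
    unfolding S_def by (auto intro: image_eqI[of _ _ 0] image_eqI[of _ _ "pi/2"])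
  moreover have "S \<subseteq> {x. 1 \<le> B x x}"
    unfolding S_def using quadratic_form_ge_one_on_arc[OF B sym \<open>B a a = 1\<close> b'(1,2)] by auto
  ultimately show "\<exists>S. connected S \<and> S \<subseteq> {x. 1 \<le> B x x} \<and> a \<in> S \<and> (b \<in> S \<or> - b \<in> S)"
    using b'(3) by auto
qed fact

lemma symmetric_multilinear_cong:
  assumes "symmetric_multilinear sc n L" "\<And>i. i < n \<Longrightarrow> v i = w i"
  shows "L v = L w"
  using assms unfolding symmetric_multilinear_def by blast

lemma symmetric_multilinear_update:
  assumes "symmetric_multilinear sc n L" "i < n"
  shows "L (v(i := x + y)) = L (v(i := x)) + L (v(i := y))"
    and "L (v(i := sc c x)) = c * L (v(i := x))"
  using assms unfolding symmetric_multilinear_def by blast+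

lemma symmetric_multilinear_permute:
  "symmetric_multilinear sc n L \<Longrightarrow> p permutes {..<n} \<Longrightarrow> L (v \<circ> p) = L v"
  unfolding symmetric_multilinear_def by blast

lemma homogeneous_polynomial_degree_1:
  fixes sc :: "'k::real_field \<Rightarrow> 'a::real_vector \<Rightarrow> 'a" and P :: "'a \<Rightarrow> 'k"
  assumes "homogeneous_polynomial sc 1 P" and sc_of_real: "\<And>r x. sc (of_real r) x = r *\<^sub>R x"
  shows "linear P" and "P (sc c x) = c * P x"
proof -
  obtain L where L: "symmetric_multilinear sc 1 L" and P: "\<And>x. P x = L (\<lambda>_. x)"
    using assms(1) unfolding homogeneous_polynomial_def by blast
  have slot: "P z = L ((\<lambda>_. 0)(0 := z))" for z
    unfolding P by (rule symmetric_multilinear_cong[OF L]) auto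
  have add: "P (x + y) = P x + P y" for x y
    unfolding slot by (rule symmetric_multilinear_update(1)[OF L]) simp
  show hom: "P (sc c x) = c * P x" for c x
    unfolding slot by (rule symmetric_multilinear_update(2)[OF L]) simp
  show "linear P"
    by (rule linearI) (simp_all add: add hom scaleR_conv_of_real flip: sc_of_real)
qed

lemma homogeneous_polynomial_degree_2:
  fixes sc :: "'k::real_field \<Rightarrow> 'a::real_vector \<Rightarrow> 'a" and P :: "'a \<Rightarrow> 'k"
  assumes "homogeneous_polynomial sc 2 P" and sc_of_real: "\<And>r x. sc (of_real r) x = r *\<^sub>R x"
  obtains B where "bilinear B" "\<And>x y. B x y = B y x" "\<And>x. P x = B x x"
    "\<And>c x. P (sc c x) = c\<^sup>2 * P x"
proof -
  obtain L where L: "symmetric_multilinear sc 2 L" and P: "\<And>x. P x = L (\<lambda>_. x)"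
    using assms(1) unfolding homogeneous_polynomial_def by blast
  define B where "B u v = L ((\<lambda>_. v)(0 := u))" for u v
  have sym: "B x y = B y x" for x y
  proof -
    have "Transposition.transpose 0 1 permutes {..<2::nat}"
      by (rule permutes_swap_id) auto
    then have "B x y = L ((\<lambda>_. y)(0 := x) \<circ> Transposition.transpose 0 1)"
      unfolding B_def by (simp add: symmetric_multilinear_permute[OF L])
    also have "\<dots> = B y x"
      unfolding B_def by (rule symmetric_multilinear_cong[OF L]) (auto simp: less_2_cases_iff)
    finally show ?thesis .
  qed
  have add: "B (x + y) z = B x z + B y z" for x y z
    unfolding B_def by (rule symmetric_multilinear_update(1)[OF L]) simp
  have hom: "B (sc c x) y = c * B x y" for c x y
    unfolding B_def by (rule symmetric_multilinear_update(2)[OF L]) simp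
  have linear_left: "linear (\<lambda>x. B x y)" for y
    by (rule linearI) (simp_all add: add hom scaleR_conv_of_real flip: sc_of_real)
  have linear_right: "linear (B x)" for x
  proof -
    have "B x = (\<lambda>y. B y x)"
      by (rule ext) (rule sym)
    then show ?thesis
      using linear_left[of x] by simp
  qed
  have "bilinear B"
    unfolding bilinear_def using linear_left linear_right by blast
  moreover have P_diag: "P x = B x x" for x
    unfolding P B_def by (simp add: fun_upd_def)
  moreover have "P (sc c x) = c\<^sup>2 * P x" for c x
    by (simp add: P_diag hom sym[of x "sc c x"] power2_eq_square)
  ultimately show ?thesis
    using sym that by blast
qed

lemma real_homogeneous_polynomial_continuous_if_preserves_connected:
  fixes P :: "'a::real_normed_vector \<Rightarrow> real"
  assumes "n \<in> {1, 2}" and hp: "homogeneous_polynomial scaleR n P"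
    and preserves: "preserves_connected P"
  shows "continuous_on UNIV P"
proof (rule ccontr)
  assume discontinuous: "\<not> continuous_on UNIV P"
  have scaleR_of_real: "of_real r *\<^sub>R x = r *\<^sub>R x" for r :: real and x :: 'a
    by simp
  consider "n = 1" | "n = 2"
    using assms(1) by blast
  then show False
  proof cases
    case 1
    note P = homogeneous_polynomial_degree_1[OF hp[unfolded 1] scaleR_of_real]
    have "0 \<in> closure {x. P x = 1}"
    proof (rule zero_in_closure_level_set_one[where sc=scaleR and n=1])
      show "\<exists>c. c ^ 1 * P x = 1" if "P x \<noteq> 0" for x
        using that by (intro exI[of _ "inverse (P x)"]) simp
    qed (use P linear_unbounded_near_zero_if_discontinuous[OF P(1) discontinuous] in auto)
    then show False
      using linear_functional_not_preserves_connected[OF P(1)] preserves by blast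
  next
    case 2
    obtain B where B: "bilinear B" "\<And>x y. B x y = B y x" "\<And>x. P x = B x x"
      and hom: "\<And>c x. P (c *\<^sub>R x) = c\<^sup>2 * P x"
      using homogeneous_polynomial_degree_2[OF hp[unfolded 2] scaleR_of_real] by blast
    have P_eq: "P = (\<lambda>x. B x x)"
      using B(3) by (simp add: fun_eq_iff)
    \<comment> \<open>Rescaling only reaches the level sets \<open>\<pm>1\<close>, so work with \<open>\<bar>P\<bar>\<close> first.\<close>
    have "0 \<in> closure {x. \<bar>P x\<bar> = 1}"
    proof (rule zero_in_closure_level_set_one[where sc=scaleR and n=2])
      show "\<exists>c. c\<^sup>2 * \<bar>P x\<bar> = 1" if "\<bar>P x\<bar> \<noteq> 0" for x
        using that by (intro exI[of _ "sqrt (inverse \<bar>P x\<bar>)"]) simp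
      show "\<exists>x. norm x < e \<and> 1 < norm \<bar>P x\<bar>" if "e > 0" for e
        using bilinear_unbounded_near_zero_if_discontinuous[OF B(1,2) _ that] discontinuous
        by (simp add: P_eq)
    qed (simp_all add: hom abs_mult)
    moreover have "{x. \<bar>P x\<bar> = 1} = {x. B x x = 1} \<union> {x. - B x x = 1}"
      by (auto simp: B(3))
    ultimately consider "0 \<in> closure {x. B x x = 1}" | "0 \<in> closure {x. - B x x = 1}"
      by auto
    then show False
    proof cases
      case 1
      then show False
        using quadratic_form_not_preserves_connected[OF B(1,2)] preserves by (simp add: P_eq)
    next
      case 2
      have "bilinear (\<lambda>x y. - B x y)"
        by (rule bilinear_compose_linear[OF B(1)]) (auto intro: linearI)
      then have "\<not> preserves_connected (uminus \<circ> P)"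
        using quadratic_form_not_preserves_connected[of "\<lambda>x y. - B x y"] 2 B(2)
        by (simp add: P_eq comp_def)
      then show False
        using preserves_connected_compose[OF continuous_on_minus[OF continuous_on_id] preserves]
        by (simp add: comp_def)
    qed
  qed
qed

lemma complex_homogeneous_polynomial_continuous_if_preserves_connected:
  fixes sc :: "complex \<Rightarrow> 'a::real_normed_vector \<Rightarrow> 'a" and P :: "'a \<Rightarrow> complex"
  assumes "n \<in> {1, 2}" and "complex_normed_scaling sc" and hp: "homogeneous_polynomial sc n P"
    and preserves: "preserves_connected P"
  shows "continuous_on UNIV P"
proof (rule ccontr)
  assume discontinuous: "\<not> continuous_on UNIV P"
  have sc_of_real: "sc (of_real r) x = r *\<^sub>R x" and norm_sc: "norm (sc c x) = norm c * norm x"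
    for r c x
    using \<open>complex_normed_scaling sc\<close> unfolding complex_normed_scaling_def by simp_all
  have preserves_Re: "preserves_connected (Re \<circ> P)"
    by (rule preserves_connected_compose[OF continuous_on_Re[OF continuous_on_id] preserves])
  consider "n = 1" | "n = 2"
    using assms(1) by blast
  then show False
  proof cases
    case 1
    note P = homogeneous_polynomial_degree_1[OF hp[unfolded 1] sc_of_real]
    have "0 \<in> closure {x. P x = 1}"
    proof (rule zero_in_closure_level_set_one[where sc=sc and n=1])
      show "\<exists>c. c ^ 1 * P x = 1" if "P x \<noteq> 0" for x
        using that by (intro exI[of _ "inverse (P x)"]) simp
    qed (use P norm_sc linear_unbounded_near_zero_if_discontinuous[OF P(1) discontinuous] in auto)
    then have "0 \<in> closure {x. (Re \<circ> P) x = 1}"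
      by (rule rev_subsetD[OF _ closure_mono]) auto
    moreover have "linear (Re \<circ> P)"
      using linear_compose[OF P(1) bounded_linear.linear[OF bounded_linear_Re]] .
    ultimately show False
      using linear_functional_not_preserves_connected preserves_Re by blast
  next
    case 2
    obtain B where B: "bilinear B" "\<And>x y. B x y = B y x" "\<And>x. P x = B x x"
      and hom: "\<And>c x. P (sc c x) = c\<^sup>2 * P x"
      using homogeneous_polynomial_degree_2[OF hp[unfolded 2] sc_of_real] by blast
    have P_eq: "P = (\<lambda>x. B x x)"
      using B(3) by (simp add: fun_eq_iff)
    have "0 \<in> closure {x. P x = 1}"
    proof (rule zero_in_closure_level_set_one[where sc=sc and n=2])
      show "\<exists>c. c\<^sup>2 * P x = 1" if "P x \<noteq> 0" for x
        using that by (intro exI[of _ "csqrt (inverse (P x))"]) simp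
      show "\<exists>x. norm x < e \<and> 1 < norm (P x)" if "e > 0" for e
        using bilinear_unbounded_near_zero_if_discontinuous[OF B(1,2) _ that] discontinuous
        by (simp add: P_eq)
    qed (simp_all add: hom norm_sc)
    then have "0 \<in> closure {x. Re (B x x) = 1}"
      by (rule rev_subsetD[OF _ closure_mono]) (auto simp: B(3))
    moreover have "bilinear (\<lambda>x y. Re (B x y))"
      using bilinear_compose_linear[OF B(1) bounded_linear.linear[OF bounded_linear_Re]] .
    ultimately show False
      using quadratic_form_not_preserves_connected[of "\<lambda>x y. Re (B x y)"] B(2) preserves_Re
      by (simp add: P_eq comp_def)
  qed
qed

theorem proposition2p2:
  fixes n :: nat
  assumes "n \<in> {1, 2}"
  shows "(\<forall>P :: 'a::real_normed_vector \<Rightarrow> real.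
            homogeneous_polynomial scaleR n P \<longrightarrow>
              (continuous_on UNIV P \<longleftrightarrow> (\<forall>C. connected C \<longrightarrow> connected (P ` C))))
       \<and> (\<forall>(sc :: complex \<Rightarrow> 'b::real_normed_vector \<Rightarrow> 'b) (P :: 'b \<Rightarrow> complex).
            complex_normed_scaling sc \<longrightarrow> homogeneous_polynomial sc n P \<longrightarrow>
              (continuous_on UNIV P \<longleftrightarrow> (\<forall>C. connected C \<longrightarrow> connected (P ` C))))"
proof -
  have "continuous_on UNIV P \<longleftrightarrow> preserves_connected P"
    if "homogeneous_polynomial scaleR n P" for P :: "'a \<Rightarrow> real"
    using continuous_imp_preserves_connected
      real_homogeneous_polynomial_continuous_if_preserves_connected[OF assms that] by blast
  moreover have "continuous_on UNIV P \<longleftrightarrow> preserves_connected P"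
    if "complex_normed_scaling sc" "homogeneous_polynomial sc n P"
    for sc :: "complex \<Rightarrow> 'b \<Rightarrow> 'b" and P :: "'b \<Rightarrow> complex"
    using continuous_imp_preserves_connected
      complex_homogeneous_polynomial_continuous_if_preserves_connected[OF assms that] by blast
  ultimately show ?thesis
    unfolding preserves_connected_def by blast
qed

end
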